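(* Let $C\subseteq\mathbb{F}_2^n$ be a binary linear $[n,k,d]$ code with $\mathbf{1}_n\in C$, whose dual $C^\perp$ has minimum distance $d^\perp$, let $t$ be a positive integer with $$d^\perp-t=\#\{u \mid C_u\neq\emptyset,\ 0<u\le n-t\}=3,$$ and suppose the nonzero weights of $C$ are exactly $d,\ n/2,\ n-d,\ n$ (with $n$ even). (1) If $d^\perp\ge 4$ and $\dim C=k$ (with $2\le k\le n-1$), then $\dfrac{n(2^{k-1}-n)}{(n-2d)^2}$ is a positive integer. (2) If $d^\perp\ge 6$, then $\dfrac{-n^2(n-1)(n-2)}{(n-2d)^2\left(n^2-(4d+3)n+4d^2+2\right)}$ is a positive integer. (3) If $d^\perp\ge 8$, then $n=(m^2+8)/3$ for some $m\in\mathbb{Z}$, and $$\frac{n^2(n^2-3n+2)}{6(3n-8)}=\frac{(m^2+2)(m^2+5)(m^2+8)^2}{486\,m^2}\quad\text{and}\quad \frac{2(n^4-7n^3+23n^2-41n+24)}{3(3n-8)}$$ are positive integers.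
   Context: $\mathbf{1}_n$ is the all-ones vector; $C^\perp$ is the dual code with respect to the standard inner product and $d^\perp$ its minimum nonzero weight; $C_u=\{c\in C:\mathrm{wt}(c)=u\}$ (Hamming weight). The paper notes that in the case $d^\perp-t=3$ the weight distribution of $C$ is supported on $0,d,n/2,n-d,n$ with $n$ even, and works under this assumption throughout. *)

theory Defs
  imports Complex_Main
begin

text \<open>A vector of F_2^n is represented by its support, a subset of {0..<n};
  vector addition is symmetric difference, Hamming weight is card,
  and the standard inner product of x and y is the parity of card (x \<inter> y).\<close>

definition binary_linear_code :: "nat \<Rightarrow> nat set set \<Rightarrow> bool" where
  "binary_linear_code n C \<longleftrightarrow> C \<subseteq> Pow {0..<n} \<and> {} \<in> C \<and>
     (\<forall>x\<in>C. \<forall>y\<in>C. (x - y) \<union> (y - x) \<in> C)"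

definition dual_code :: "nat \<Rightarrow> nat set set \<Rightarrow> nat set set" where
  "dual_code n C = {x. x \<subseteq> {0..<n} \<and> (\<forall>c\<in>C. even (card (x \<inter> c)))}"

definition min_distance :: "nat set set \<Rightarrow> nat \<Rightarrow> bool" where
  "min_distance C d \<longleftrightarrow> (\<exists>c\<in>C. c \<noteq> {} \<and> card c = d) \<and>
     (\<forall>c\<in>C. c \<noteq> {} \<longrightarrow> d \<le> card c)"

end

theory Submission
  imports Defs
begin

(*
  Write bias n c = n - 2 wt(c) = sum over i of (-1)^[i in c]. Multiplying out, the j-th power
  moment of bias over C against the character of X is a combination of character sums over C
  at sets of size at most |X| + j. Such a sum is |C| or 0 according as the set lies in the dual
  code or not, so for j < d^perp only the empty set contributes: the first d^perp - 1 power
  moments of C are |C| / 2^n times those of the whole space, which are 2^n n, 2^n (3n^2 - 2n)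
  and 2^n (15n^3 - 30n^2 + 16n) for j = 2, 4, 6.

  Since the all-ones word lies in C, complementation gives A_d = A_(n-d), so the even moments
  involve only |C|, a = A_d and b = A_(n/2); the counting hypothesis is needed only to rule out
  d = n/2. The moment j = 2 gives (1). Eliminating |C| between j = 2 and j = 4 gives (2).
  Adding j = 6 forces (n - 2d)^2 to be a root of x (x - n^2) (x - (3n - 8)), hence
  (n - 2d)^2 = 3n - 8, and (3) follows with m = n - 2d.
*)

definition character :: "nat set \<Rightarrow> nat set \<Rightarrow> real" where
  "character X c = (-1) ^ card (c \<inter> X)"

definition bias :: "nat \<Rightarrow> nat set \<Rightarrow> real" where
  "bias n c = real n - 2 * real (card c)"

lemma finite_binary_linear_code:
  assumes "binary_linear_code n C"
  shows "finite C"
  using assms by (auto simp: binary_linear_code_def intro: finite_subset)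

lemma finite_codeword:
  assumes "binary_linear_code n C" "c \<in> C"
  shows "finite c"
  using assms by (auto simp: binary_linear_code_def intro: finite_subset[of c "{0..<n}"])

lemma card_sym_diff_add:
  assumes "finite A" "finite B"
  shows "card (sym_diff A B) + 2 * card (A \<inter> B) = card A + card B"
proof -
  have "card (sym_diff A B) = card (A - B) + card (B - A)"
    using assms by (intro card_Un_disjoint) auto
  moreover have "card A = card (A - B) + card (A \<inter> B)" "card B = card (B - A) + card (A \<inter> B)"
    using assms card_Int_Diff[of A B] card_Int_Diff[of B A] by (simp_all add: Int_commute)
  ultimately show ?thesis by simp
qed

lemma minus_one_power_card_sym_diff:
  assumes "finite A" "finite B"
  shows "(-1::real) ^ card (sym_diff A B) = (-1) ^ card A * (-1) ^ card B"
proof -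
  have "(-1::real) ^ card (sym_diff A B) = (-1) ^ (card (sym_diff A B) + 2 * card (A \<inter> B))"
    by (simp add: power_add power_mult)
  then show ?thesis by (simp only: card_sym_diff_add[OF assms] power_add)
qed

lemma character_sym_diff_left:
  assumes "finite c"
  shows "character (sym_diff X Y) c = character X c * character Y c"
proof -
  have "c \<inter> sym_diff X Y = sym_diff (c \<inter> X) (c \<inter> Y)" by auto
  then show ?thesis
    unfolding character_def using assms by (simp add: minus_one_power_card_sym_diff)
qed

lemma character_sym_diff_right:
  assumes "finite c" "finite c'"
  shows "character X (sym_diff c c') = character X c * character X c'"
proof -
  have "sym_diff c c' \<inter> X = sym_diff (c \<inter> X) (c' \<inter> X)" by auto
  then show ?thesis
    unfolding character_def using assms by (simp add: minus_one_power_card_sym_diff)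
qed

lemma character_singleton: "character {i} c = (if i \<in> c then -1 else 1)"
  by (simp add: character_def)

lemma bias_eq_sum_character:
  assumes "c \<subseteq> {0..<n}"
  shows "bias n c = (\<Sum>i<n. character {i} c)"
proof -
  have "(\<Sum>i<n. character {i} c) = (\<Sum>i<n. 1 - 2 * of_bool (i \<in> c))"
    by (intro sum.cong) (auto simp: character_singleton)
  also have "\<dots> = real n - 2 * real (card ({..<n} \<inter> c))"
    by (simp add: sum_subtractf sum_distrib_left[symmetric])
  also have "{..<n} \<inter> c = c" using assms by auto
  finally show ?thesis by (simp add: bias_def)
qed

lemma sum_character_linear_code:
  assumes lin: "binary_linear_code n D" and X: "X \<subseteq> {0..<n}"
  shows "(\<Sum>c\<in>D. character X c) = (if X \<in> dual_code n D then real (card D) else 0)"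
proof (cases "X \<in> dual_code n D")
  case True
  then have "\<forall>c\<in>D. character X c = 1"
    by (auto simp: dual_code_def character_def Int_commute)
  with True show ?thesis by simp
next
  case False
  then obtain c0 where c0: "c0 \<in> D" "character X c0 = -1"
    using X by (auto simp: dual_code_def character_def Int_commute)
  have closed: "\<And>x y. x \<in> D \<Longrightarrow> y \<in> D \<Longrightarrow> sym_diff x y \<in> D"
    using lin by (auto simp: binary_linear_code_def)
  have involution: "sym_diff (sym_diff c c0) c0 = c" for c
    by auto
  have "(\<Sum>c\<in>D. character X c) = (\<Sum>c\<in>D. character X (sym_diff c c0))"
    by (rule sum.reindex_bij_witness[where i="\<lambda>c. sym_diff c c0" and j="\<lambda>c. sym_diff c c0"])
      (auto simp: closed c0 involution)
  also have "\<dots> = - (\<Sum>c\<in>D. character X c)"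
    using c0 finite_codeword[OF lin] by (simp add: character_sym_diff_right sum_negf)
  finally show ?thesis using False by simp
qed

lemma binary_linear_code_Pow: "binary_linear_code n (Pow {0..<n})"
  by (auto simp: binary_linear_code_def)

lemma dual_code_Pow: "dual_code n (Pow {0..<n}) = {{}}"
proof -
  have "X = {}" if "X \<in> dual_code n (Pow {0..<n})" for X
  proof (rule ccontr)
    assume "X \<noteq> {}"
    then obtain i where "i \<in> X" by auto
    with that have "{i} \<in> Pow {0..<n}" by (auto simp: dual_code_def)
    with that have "even (card (X \<inter> {i}))" unfolding dual_code_def by blast
    with \<open>i \<in> X\<close> show False by simp
  qed
  then show ?thesis by (auto simp: dual_code_def)
qed

lemma sum_character_bias_Suc:
  assumes "D \<subseteq> Pow {0..<n}"
  shows "(\<Sum>c\<in>D. character X c * bias n c ^ Suc j) =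
         (\<Sum>i<n. \<Sum>c\<in>D. character (sym_diff X {i}) c * bias n c ^ j)"
proof -
  have "character X c * bias n c ^ Suc j = (\<Sum>i<n. character (sym_diff X {i}) c * bias n c ^ j)"
    if "c \<in> D" for c
  proof -
    have sub: "c \<subseteq> {0..<n}" using that assms by auto
    then have "finite c" by (rule finite_subset) simp
    then have "character X c * bias n c = (\<Sum>i<n. character (sym_diff X {i}) c)"
      by (simp add: bias_eq_sum_character[OF sub] sum_distrib_left character_sym_diff_left)
    then have "(character X c * bias n c) * bias n c ^ j =
               (\<Sum>i<n. character (sym_diff X {i}) c * bias n c ^ j)"
      by (simp add: sum_distrib_right)
    then show ?thesis by (simp add: mult.assoc)
  qed
  then have "(\<Sum>c\<in>D. character X c * bias n c ^ Suc j) =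
             (\<Sum>c\<in>D. \<Sum>i<n. character (sym_diff X {i}) c * bias n c ^ j)"
    by (rule sum.cong[OF refl])
  also have "\<dots> = (\<Sum>i<n. \<Sum>c\<in>D. character (sym_diff X {i}) c * bias n c ^ j)"
    by (rule sum.swap)
  finally show ?thesis .
qed

lemma sum_character_bias_power_proportional:
  assumes C: "binary_linear_code n C" and D: "binary_linear_code n D"
    and C_dual: "\<And>X. X \<in> dual_code n C \<Longrightarrow> X \<noteq> {} \<Longrightarrow> s \<le> card X"
    and D_dual: "\<And>X. X \<in> dual_code n D \<Longrightarrow> X \<noteq> {} \<Longrightarrow> s \<le> card X"
    and "X \<subseteq> {0..<n}" "card X + j < s"
  shows "card D * (\<Sum>c\<in>C. character X c * bias n c ^ j) =
         card C * (\<Sum>c\<in>D. character X c * bias n c ^ j)"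
  using assms(5,6)
proof (induction j arbitrary: X)
  case 0
  have "X \<in> dual_code n C \<longleftrightarrow> X = {}" "X \<in> dual_code n D \<longleftrightarrow> X = {}"
    using C_dual[of X] D_dual[of X] 0 by (auto simp: dual_code_def)
  then show ?case
    using sum_character_linear_code[OF C 0(1)] sum_character_linear_code[OF D 0(1)] by simp
next
  case (Suc j)
  have IH: "card D * (\<Sum>c\<in>C. character (sym_diff X {i}) c * bias n c ^ j) =
            card C * (\<Sum>c\<in>D. character (sym_diff X {i}) c * bias n c ^ j)" if "i < n" for i
  proof (rule Suc.IH)
    show "sym_diff X {i} \<subseteq> {0..<n}" using Suc.prems(1) that by auto
    have "card (sym_diff X {i}) \<le> card (insert i X)"
      using finite_subset[OF Suc.prems(1)] by (intro card_mono) auto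
    also have "\<dots> \<le> card X + 1" by (simp add: card_insert_le_m1 card_insert_if)
    finally show "card (sym_diff X {i}) + j < s" using Suc.prems(2) by simp
  qed
  have C_Pow: "C \<subseteq> Pow {0..<n}" and D_Pow: "D \<subseteq> Pow {0..<n}"
    using C D by (simp_all add: binary_linear_code_def)
  have "card D * (\<Sum>c\<in>C. character X c * bias n c ^ Suc j) =
        (\<Sum>i<n. card D * (\<Sum>c\<in>C. character (sym_diff X {i}) c * bias n c ^ j))"
    by (simp only: sum_character_bias_Suc[OF C_Pow] sum_distrib_left)
  also have "\<dots> = (\<Sum>i<n. card C * (\<Sum>c\<in>D. character (sym_diff X {i}) c * bias n c ^ j))"
    using IH by (intro sum.cong) auto
  also have "\<dots> = card C * (\<Sum>c\<in>D. character X c * bias n c ^ Suc j)"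
    by (simp only: sum_character_bias_Suc[OF D_Pow] sum_distrib_left)
  finally show ?case .
qed

lemma power_moment_linear_code:
  assumes lin: "binary_linear_code n C" and dual: "min_distance (dual_code n C) dp" and "j < dp"
  shows "(\<Sum>c\<in>C. bias n c ^ j) = card C / 2 ^ n * (\<Sum>c\<in>Pow {0..<n}. bias n c ^ j)"
proof -
  have "card (Pow {0..<n}) * (\<Sum>c\<in>C. character {} c * bias n c ^ j) =
        card C * (\<Sum>c\<in>Pow {0..<n}. character {} c * bias n c ^ j)"
    using dual \<open>j < dp\<close>
    by (intro sum_character_bias_power_proportional[OF lin binary_linear_code_Pow])
      (auto simp: min_distance_def dual_code_Pow)
  then show ?thesis by (simp add: character_def card_Pow field_simps)
qed

lemma sum_Pow_bias_Suc:
  "(\<Sum>c\<in>Pow {0..<Suc n}. g (bias (Suc n) c)) =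
   (\<Sum>c\<in>Pow {0..<n}. g (bias n c + 1) + g (bias n c - 1))"
proof -
  have inj: "inj_on (insert n) (Pow {0..<n})"
    by (rule inj_onI) (metis PowD atLeastLessThan_iff insert_ident less_irrefl subsetD)
  have split: "Pow {0..<Suc n} = Pow {0..<n} \<union> insert n ` Pow {0..<n}"
    by (simp add: atLeast0_lessThan_Suc Pow_insert)
  have disj: "Pow {0..<n} \<inter> insert n ` Pow {0..<n} = {}"
    by auto
  have down: "bias (Suc n) (insert n c) = bias n c - 1" if "c \<in> Pow {0..<n}" for c
  proof -
    have "n \<notin> c" "finite c" using that finite_subset[of c "{0..<n}"] by auto
    then show ?thesis by (simp add: bias_def)
  qed
  have "(\<Sum>c\<in>Pow {0..<Suc n}. g (bias (Suc n) c)) =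
      (\<Sum>c\<in>Pow {0..<n}. g (bias (Suc n) c)) + (\<Sum>c\<in>Pow {0..<n}. g (bias (Suc n) (insert n c)))"
    unfolding split by (simp add: sum.union_disjoint[OF _ _ disj] sum.reindex[OF inj])
  also have "(\<Sum>c\<in>Pow {0..<n}. g (bias (Suc n) (insert n c))) = (\<Sum>c\<in>Pow {0..<n}. g (bias n c - 1))"
    by (rule sum.cong) (simp_all add: down)
  also have "(\<Sum>c\<in>Pow {0..<n}. g (bias (Suc n) c)) = (\<Sum>c\<in>Pow {0..<n}. g (bias n c + 1))"
    by (simp add: bias_def algebra_simps)
  finally show ?thesis by (simp add: sum.distrib)
qed

lemma sum_bias_square_Pow: "(\<Sum>c\<in>Pow {0..<n}. bias n c ^ 2) = 2 ^ n * real n"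
proof (induction n)
  case (Suc n)
  have "(\<Sum>c\<in>Pow {0..<Suc n}. bias (Suc n) c ^ 2) = (\<Sum>c\<in>Pow {0..<n}. 2 * bias n c ^ 2 + 2)"
    by (subst sum_Pow_bias_Suc[of "\<lambda>x. x ^ 2"]) (simp add: power2_eq_square algebra_simps)
  then show ?case using Suc.IH
    by (simp only: sum.distrib sum_distrib_left[symmetric] sum_constant)
      (simp add: card_Pow algebra_simps)
qed (simp add: bias_def)

lemma sum_bias_power_4_Pow: "(\<Sum>c\<in>Pow {0..<n}. bias n c ^ 4) = 2 ^ n * (3 * real n ^ 2 - 2 * real n)"
proof (induction n)
  case (Suc n)
  have "(\<Sum>c\<in>Pow {0..<Suc n}. bias (Suc n) c ^ 4) =
        (\<Sum>c\<in>Pow {0..<n}. 2 * bias n c ^ 4 + 12 * bias n c ^ 2 + 2)"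
    by (subst sum_Pow_bias_Suc[of "\<lambda>x. x ^ 4"]) (simp add: power_def numeral_eq_Suc algebra_simps)
  then show ?case using Suc.IH sum_bias_square_Pow[of n]
    by (simp only: sum.distrib sum_distrib_left[symmetric] sum_constant)
      (simp add: card_Pow algebra_simps power2_eq_square)
qed (simp add: bias_def)

lemma sum_bias_power_6_Pow:
  "(\<Sum>c\<in>Pow {0..<n}. bias n c ^ 6) = 2 ^ n * (15 * real n ^ 3 - 30 * real n ^ 2 + 16 * real n)"
proof (induction n)
  case (Suc n)
  have "(\<Sum>c\<in>Pow {0..<Suc n}. bias (Suc n) c ^ 6) =
        (\<Sum>c\<in>Pow {0..<n}. 2 * bias n c ^ 6 + 30 * bias n c ^ 4 + 30 * bias n c ^ 2 + 2)"
    by (subst sum_Pow_bias_Suc[of "\<lambda>x. x ^ 6"]) (simp add: power_def numeral_eq_Suc algebra_simps)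
  then show ?case using Suc.IH sum_bias_square_Pow[of n] sum_bias_power_4_Pow[of n]
    by (simp only: sum.distrib sum_distrib_left[symmetric] sum_constant)
      (simp add: card_Pow algebra_simps power2_eq_square power3_eq_cube)
qed (simp add: bias_def)

lemma min_distance_pos:
  assumes "binary_linear_code n C" "min_distance C d"
  shows "0 < d"
proof -
  obtain c where "c \<in> C" "c \<noteq> {}" "card c = d"
    using assms(2) by (auto simp: min_distance_def)
  moreover have "finite c"
    using finite_codeword[OF assms(1) \<open>c \<in> C\<close>] .
  ultimately show ?thesis by auto
qed

lemma card_weight_zero:
  assumes "binary_linear_code n C"
  shows "card {c \<in> C. card c = 0} = 1"
proof -
  have "{c \<in> C. card c = 0} = {{}}"
    using assms finite_codeword[OF assms] by (auto simp: binary_linear_code_def card_eq_0_iff)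
  then show ?thesis by simp
qed

lemma card_weight_complement:
  assumes lin: "binary_linear_code n C" and ones: "{0..<n} \<in> C" and "w \<le> n"
  shows "card {c \<in> C. card c = n - w} = card {c \<in> C. card c = w}"
proof -
  have C_Pow: "C \<subseteq> Pow {0..<n}"
    and closed: "\<And>x y. x \<in> C \<Longrightarrow> y \<in> C \<Longrightarrow> sym_diff x y \<in> C"
    using lin by (auto simp: binary_linear_code_def)
  have compl_in: "{0..<n} - c \<in> C" if "c \<in> C" for c
  proof -
    have "sym_diff {0..<n} c = {0..<n} - c" using C_Pow that by auto
    with closed[OF ones that] show ?thesis by simp
  qed
  have card_compl: "card ({0..<n} - c) = n - card c" if "c \<in> C" for c
    using that C_Pow by (subst card_Diff_subset) (auto intro: finite_subset)
  have involution: "{0..<n} - ({0..<n} - c) = c" if "c \<in> C" for c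
    using that C_Pow by auto
  have "bij_betw (\<lambda>c. {0..<n} - c) {c \<in> C. card c = w} {c \<in> C. card c = n - w}"
    by (rule bij_betw_byWitness[where f'="\<lambda>c. {0..<n} - c"])
      (use \<open>w \<le> n\<close> compl_in card_compl involution in auto)
  then show ?thesis by (simp add: bij_betw_same_card)
qed

lemma card_image_linear_code:
  assumes "binary_linear_code n C"
  shows "card ` C = insert 0 {card c | c. c \<in> C \<and> c \<noteq> {}}"
proof -
  have "{} \<in> C" using assms by (simp add: binary_linear_code_def)
  then show ?thesis by (auto intro: rev_image_eqI)
qed

lemma card_weight_pos:
  assumes "binary_linear_code n C" "w \<in> card ` C"
  shows "0 < card {c \<in> C. card c = w}"
  using assms finite_binary_linear_code[OF assms(1)] by (auto simp: card_gt_0_iff)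

lemma even_power_moment_self_complementary:
  assumes lin: "binary_linear_code n C" and ones: "{0..<n} \<in> C"
    and weights: "card ` C = {0, d, h, n - d, n}"
    and "n = 2 * h" "0 < d" "d < h" "even j"
  shows "(\<Sum>c\<in>C. bias n c ^ j) =
         2 * real n ^ j + 2 * real (card {c \<in> C. card c = d}) * (real n - 2 * real d) ^ j
         + real (card {c \<in> C. card c = h}) * 0 ^ j"
proof -
  define A where "A w = real (card {c \<in> C. card c = w})" for w
  define g where "g w = (real n - 2 * real w) ^ j" for w
  have level_sum: "(\<Sum>c\<in>{c \<in> C. card c = w}. bias n c ^ j) = A w * g w" for w
  proof -
    have "(\<Sum>c\<in>{c \<in> C. card c = w}. bias n c ^ j) = (\<Sum>c\<in>{c \<in> C. card c = w}. g w)"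
      by (rule sum.cong) (auto simp: bias_def g_def)
    then show ?thesis by (simp add: A_def)
  qed
  have "(\<Sum>c\<in>C. bias n c ^ j) = A 0 * g 0 + A d * g d + A h * g h + A (n - d) * g (n - d) + A n * g n"
  proof -
    have "(\<Sum>c\<in>C. bias n c ^ j) = (\<Sum>w\<in>card ` C. \<Sum>c\<in>{c \<in> C. card c = w}. bias n c ^ j)"
      by (rule sum.image_gen[OF finite_binary_linear_code[OF lin]])
    also have "\<dots> = A 0 * g 0 + A d * g d + A h * g h + A (n - d) * g (n - d) + A n * g n"
      using \<open>n = 2 * h\<close> \<open>0 < d\<close> \<open>d < h\<close> unfolding weights level_sum by simp
    finally show ?thesis .
  qed
  moreover have "A 0 = 1" "A n = 1" "A (n - d) = A d"
    using card_weight_zero[OF lin] card_weight_complement[OF lin ones, of 0]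
      card_weight_complement[OF lin ones, of d] \<open>n = 2 * h\<close> \<open>d < h\<close>
    by (simp_all add: A_def)
  moreover have "g (n - d) = g d" "g n = real n ^ j" "g h = 0 ^ j" "g 0 = real n ^ j"
    using \<open>n = 2 * h\<close> \<open>d < h\<close> power_minus_even[OF \<open>even j\<close>, of "real n - 2 * real d"]
      power_minus_even[OF \<open>even j\<close>, of "real n"]
    by (simp_all add: g_def algebra_simps)
  ultimately show ?thesis by (simp add: A_def g_def)
qed

lemma weight_moment_equations:
  assumes lin: "binary_linear_code n C" and ones: "{0..<n} \<in> C"
    and dual: "min_distance (dual_code n C) dp"
    and weights: "card ` C = {0, d, h, n - d, n}" and "n = 2 * h" "0 < d" "d < h"
  defines "K \<equiv> real (card C)" and "N \<equiv> real n" and "s \<equiv> real n - 2 * real d"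
    and "a \<equiv> real (card {c \<in> C. card c = d})" and "b \<equiv> real (card {c \<in> C. card c = h})"
  shows "0 < dp \<Longrightarrow> K = 2 + 2 * a + b"
    and "2 < dp \<Longrightarrow> K * N = 2 * N\<^sup>2 + 2 * a * s\<^sup>2"
    and "4 < dp \<Longrightarrow> K * (3 * N\<^sup>2 - 2 * N) = 2 * N ^ 4 + 2 * a * s ^ 4"
    and "6 < dp \<Longrightarrow> K * (15 * N ^ 3 - 30 * N\<^sup>2 + 16 * N) = 2 * N ^ 6 + 2 * a * s ^ 6"
proof -
  have moment: "K * (\<Sum>c\<in>Pow {0..<n}. bias n c ^ j) / 2 ^ n = 2 * N ^ j + 2 * a * s ^ j + b * 0 ^ j"
    if "even j" "j < dp" for j
    using power_moment_linear_code[OF lin dual \<open>j < dp\<close>]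
      even_power_moment_self_complementary[OF lin ones weights assms(5-7) \<open>even j\<close>]
    by (simp add: K_def N_def s_def a_def b_def)
  show "K = 2 + 2 * a + b" if "0 < dp"
    using moment[of 0] that by (simp add: card_Pow)
  show "K * N = 2 * N\<^sup>2 + 2 * a * s\<^sup>2" if "2 < dp"
    using moment[of 2] that by (simp add: sum_bias_square_Pow N_def)
  show "K * (3 * N\<^sup>2 - 2 * N) = 2 * N ^ 4 + 2 * a * s ^ 4" if "4 < dp"
    using moment[of 4] that by (simp add: sum_bias_power_4_Pow N_def)
  show "K * (15 * N ^ 3 - 30 * N\<^sup>2 + 16 * N) = 2 * N ^ 6 + 2 * a * s ^ 6" if "6 < dp"
    using moment[of 6] that by (simp add: sum_bias_power_6_Pow N_def)
qed

lemma min_weight_less_half: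
  assumes dmin: "min_distance C d" and "0 < t"
    and weights: "{card c | c. c \<in> C \<and> c \<noteq> {}} = {d, n div 2, n - d, n}"
    and count: "card {u. (\<exists>c\<in>C. card c = u) \<and> 0 < u \<and> u \<le> n - t} = 3"
  shows "d < n div 2"
proof -
  have "{u. (\<exists>c\<in>C. card c = u) \<and> 0 < u \<and> u \<le> n - t} \<subseteq> {d, n div 2, n - d}"
  proof
    fix u assume "u \<in> {u. (\<exists>c\<in>C. card c = u) \<and> 0 < u \<and> u \<le> n - t}"
    then obtain c where c: "c \<in> C" "card c = u" "0 < u" and "u < n"
      using \<open>0 < t\<close> by auto
    then have "c \<noteq> {}" by auto
    with c have "u \<in> {card c | c. c \<in> C \<and> c \<noteq> {}}" by blast
    with \<open>u < n\<close> show "u \<in> {d, n div 2, n - d}"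
      unfolding weights by auto
  qed
  from card_mono[OF _ this] have "3 \<le> card {d, n div 2, n - d}"
    using count by simp
  moreover have "card {d, d, n - d} \<le> 2"
    by (simp add: card_insert_if)
  ultimately have "d \<noteq> n div 2"
    by auto
  moreover have "n div 2 \<in> {card c | c. c \<in> C \<and> c \<noteq> {}}"
    unfolding weights by simp
  then have "d \<le> n div 2"
    using dmin by (auto simp: min_distance_def)
  ultimately show ?thesis by simp
qed

lemma weight_count_from_dimension:
  fixes N D a :: real
  assumes "2 ^ k * N = 2 * N\<^sup>2 + 2 * a * (N - 2 * D)\<^sup>2" "1 \<le> k" "N \<noteq> 2 * D"
  shows "N * (2 ^ (k - 1) - N) / (N - 2 * D)\<^sup>2 = a"
proof -
  define P :: real where "P = 2 ^ (k - 1)"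
  have "2 ^ k = 2 * P"
    using \<open>1 \<le> k\<close> unfolding P_def by (cases k) simp_all
  with assms(1) have "2 * P * N = 2 * N\<^sup>2 + 2 * a * (N - 2 * D)\<^sup>2"
    by simp
  then have "N * (P - N) = a * (N - 2 * D)\<^sup>2"
    by algebra
  with \<open>N \<noteq> 2 * D\<close> show ?thesis
    by (simp add: P_def divide_eq_eq)
qed

lemma weight_count_from_moments_2_4:
  fixes N D K a :: real
  assumes E2: "K * N = 2 * N\<^sup>2 + 2 * a * (N - 2 * D)\<^sup>2"
    and E4: "K * (3 * N\<^sup>2 - 2 * N) = 2 * N ^ 4 + 2 * a * (N - 2 * D) ^ 4"
    and "2 < N"
  shows "- (N\<^sup>2 * (N - 1) * (N - 2)) / ((N - 2 * D)\<^sup>2 * (N\<^sup>2 - (4 * D + 3) * N + 4 * D\<^sup>2 + 2)) = a"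
proof -
  have eliminated_K: "a * ((N - 2 * D)\<^sup>2 * (N\<^sup>2 - (4 * D + 3) * N + 4 * D\<^sup>2 + 2)) =
      - (N\<^sup>2 * (N - 1) * (N - 2))"
    using E2 E4 by algebra
  moreover have "N\<^sup>2 * (N - 1) * (N - 2) \<noteq> 0"
    using \<open>2 < N\<close> by simp
  ultimately have "(N - 2 * D)\<^sup>2 * (N\<^sup>2 - (4 * D + 3) * N + 4 * D\<^sup>2 + 2) \<noteq> 0"
    by auto
  with eliminated_K show ?thesis by (simp add: field_simps)
qed

lemma count_formula_in_terms_of_m:
  fixes m :: real
  assumes "m \<noteq> 0"
  shows "((m\<^sup>2 + 8) / 3)\<^sup>2 * (((m\<^sup>2 + 8) / 3)\<^sup>2 - 3 * ((m\<^sup>2 + 8) / 3) + 2) / (6 * (3 * ((m\<^sup>2 + 8) / 3) - 8))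
       = (m\<^sup>2 + 2) * (m\<^sup>2 + 5) * (m\<^sup>2 + 8)\<^sup>2 / (486 * m\<^sup>2)"
proof -
  define M where "M = m\<^sup>2"
  have "M \<noteq> 0" using assms by (simp add: M_def)
  then show ?thesis
    unfolding M_def[symmetric] by (simp add: field_simps) algebra
qed

lemma length_and_weight_counts_from_moments_2_4_6:
  fixes N K a b s :: real
  assumes E0: "K = 2 + 2 * a + b"
    and E2: "K * N = 2 * N\<^sup>2 + 2 * a * s\<^sup>2"
    and E4: "K * (3 * N\<^sup>2 - 2 * N) = 2 * N ^ 4 + 2 * a * s ^ 4"
    and E6: "K * (15 * N ^ 3 - 30 * N\<^sup>2 + 16 * N) = 2 * N ^ 6 + 2 * a * s ^ 6"
    and "0 < s" "s < N" "a \<noteq> 0"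
  shows "N = (s\<^sup>2 + 8) / 3"
    and "N\<^sup>2 * (N\<^sup>2 - 3 * N + 2) / (6 * (3 * N - 8)) = (s\<^sup>2 + 2) * (s\<^sup>2 + 5) * (s\<^sup>2 + 8)\<^sup>2 / (486 * s\<^sup>2)"
    and "N\<^sup>2 * (N\<^sup>2 - 3 * N + 2) / (6 * (3 * N - 8)) = a"
    and "2 * (N ^ 4 - 7 * N ^ 3 + 23 * N\<^sup>2 - 41 * N + 24) / (3 * (3 * N - 8)) = b"
proof -
  define x where "x = s\<^sup>2"
  have E4': "K * (3 * N\<^sup>2 - 2 * N) = 2 * N ^ 4 + 2 * a * x\<^sup>2"
    and E6': "K * (15 * N ^ 3 - 30 * N\<^sup>2 + 16 * N) = 2 * N ^ 6 + 2 * a * x ^ 3"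
    using E4 E6 by (simp_all add: x_def flip: power_mult)
  have "a * x * (x - N\<^sup>2) * (x - (3 * N - 8)) = 0"
    using E2 E4' E6' unfolding x_def[symmetric] by algebra
  moreover have "x < N\<^sup>2" "0 < x"
    using \<open>0 < s\<close> \<open>s < N\<close> by (simp_all add: x_def power_strict_mono)
  ultimately have x: "x = 3 * N - 8"
    using \<open>a \<noteq> 0\<close> by simp
  then show N: "N = (s\<^sup>2 + 8) / 3"
    by (simp add: x_def)
  show "N\<^sup>2 * (N\<^sup>2 - 3 * N + 2) / (6 * (3 * N - 8)) = (s\<^sup>2 + 2) * (s\<^sup>2 + 5) * (s\<^sup>2 + 8)\<^sup>2 / (486 * s\<^sup>2)"
    unfolding N using \<open>0 < s\<close> by (intro count_formula_in_terms_of_m) simp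
  have "6 * a * (3 * N - 8) = N\<^sup>2 * (N\<^sup>2 - 3 * N + 2)"
    using E2 E4' x unfolding x_def[symmetric] by algebra
  moreover have "3 * b * (3 * N - 8) = 2 * (N ^ 4 - 7 * N ^ 3 + 23 * N\<^sup>2 - 41 * N + 24)"
  proof -
    have "N * (3 * b * (3 * N - 8) - 2 * (N ^ 4 - 7 * N ^ 3 + 23 * N\<^sup>2 - 41 * N + 24)) = 0"
      using E0 E2 E4' x unfolding x_def[symmetric] by algebra
    with \<open>0 < s\<close> \<open>s < N\<close> show ?thesis by simp
  qed
  moreover have "0 < 3 * N - 8"
    using x \<open>0 < x\<close> by simp
  ultimately show "N\<^sup>2 * (N\<^sup>2 - 3 * N + 2) / (6 * (3 * N - 8)) = a"
    and "2 * (N ^ 4 - 7 * N ^ 3 + 23 * N\<^sup>2 - 41 * N + 24) / (3 * (3 * N - 8)) = b"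
    by (simp_all add: field_simps)
qed

theorem lemma5p1:
  fixes n k d dp t :: nat and C :: "nat set set"
  assumes lin: "binary_linear_code n C"
    and dim: "card C = 2 ^ k"
    and dmin: "min_distance C d"
    and ones: "{0..<n} \<in> C"
    and dpmin: "min_distance (dual_code n C) dp"
    and tpos: "t > 0"
    and dt: "int dp - int t = 3"
    and cnt: "card {u. (\<exists>c\<in>C. card c = u) \<and> 0 < u \<and> u \<le> n - t} = 3"
    and nev: "even n"
    and wts: "{card c | c. c \<in> C \<and> c \<noteq> {}} = {d, n div 2, n - d, n}"
  shows
    "(dp \<ge> 4 \<longrightarrow> 2 \<le> k \<longrightarrow> k \<le> n - 1 \<longrightarrow>
        (\<exists>N::nat. N > 0 \<and>
           real n * (2 ^ (k - 1) - real n) / (real n - 2 * real d) ^ 2 = real N))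
   \<and> (dp \<ge> 6 \<longrightarrow>
        (\<exists>N::nat. N > 0 \<and>
           - (real n ^ 2 * (real n - 1) * (real n - 2)) /
             ((real n - 2 * real d) ^ 2 *
              (real n ^ 2 - (4 * real d + 3) * real n + 4 * real d ^ 2 + 2)) = real N))
   \<and> (dp \<ge> 8 \<longrightarrow>
        (\<exists>m::int. real n = (real_of_int m ^ 2 + 8) / 3 \<and>
           real n ^ 2 * (real n ^ 2 - 3 * real n + 2) / (6 * (3 * real n - 8)) =
             (real_of_int m ^ 2 + 2) * (real_of_int m ^ 2 + 5) * (real_of_int m ^ 2 + 8) ^ 2
               / (486 * real_of_int m ^ 2) \<and>
           (\<exists>N::nat. N > 0 \<and>
              real n ^ 2 * (real n ^ 2 - 3 * real n + 2) / (6 * (3 * real n - 8)) = real N) \<and>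
           (\<exists>N::nat. N > 0 \<and>
              2 * (real n ^ 4 - 7 * real n ^ 3 + 23 * real n ^ 2 - 41 * real n + 24)
                / (3 * (3 * real n - 8)) = real N)))"
proof -
  obtain h where h: "n = 2 * h" using nev by blast
  have "0 < d" "d < h"
    using min_distance_pos[OF lin dmin] min_weight_less_half[OF dmin tpos wts cnt] h by simp_all
  have weights: "card ` C = {0, d, h, n - d, n}"
    using card_image_linear_code[OF lin] wts h by simp
  define a where "a = card {c \<in> C. card c = d}"
  define b where "b = card {c \<in> C. card c = h}"
  have "0 < a" "0 < b"
    using card_weight_pos[OF lin] weights by (simp_all add: a_def b_def)
  note E = weight_moment_equations[OF lin ones dpmin weights h \<open>0 < d\<close> \<open>d < h\<close>,
      folded a_def b_def]
  have "0 < real n - 2 * real d" "real n - 2 * real d < real n" "2 < real n"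
    using h \<open>0 < d\<close> \<open>d < h\<close> by simp_all
  moreover have "4 \<le> dp"
    using dt tpos by linarith
  ultimately show ?thesis
    apply (intro conjI impI)
    subgoal
      using weight_count_from_dimension[of k "real n" a "real d"] E(2) dim \<open>0 < a\<close> by auto
    subgoal
      using weight_count_from_moments_2_4[OF E(2,3)] \<open>0 < a\<close> by auto
    subgoal
      using length_and_weight_counts_from_moments_2_4_6[OF E] \<open>0 < a\<close> \<open>0 < b\<close>
      by (intro exI[of _ "int n - 2 * int d"]) auto
    done
qed

end
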